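(* Let $\alpha\in(0,1)$. The equation $1/\alpha+(1+1/\alpha)z-z^{2-\alpha/2}=0$ has a unique positive root $z=r^*=r^*(\alpha)$, and $$\mathrm{g}(x,y,\alpha):=\frac{2+2(1+\alpha)x-\alpha x^{2-\alpha/2}}{1+x}-\frac{\alpha y^{2-\alpha/2}}{1+y}>0\qquad\text{for all } 0\le x,y<r^*.$$ *)

theory Defs
  imports Complex_Main
begin

definition rstar_eq :: "real \<Rightarrow> real \<Rightarrow> real" where
  "rstar_eq \<alpha> z = 1/\<alpha> + (1 + 1/\<alpha>) * z - z powr (2 - \<alpha>/2)"

definition g :: "real \<Rightarrow> real \<Rightarrow> real \<Rightarrow> real" where
  "g x y \<alpha> = (2 + 2*(1+\<alpha>)*x - \<alpha> * x powr (2 - \<alpha>/2)) / (1 + x)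
              - \<alpha> * y powr (2 - \<alpha>/2) / (1 + y)"

end

theory Submission
  imports Defs
begin

text \<open>
  Write \<open>p = 2 - \<alpha>/2\<close>. Since \<open>z powr p\<close> is convex and vanishes at \<open>0\<close>, on \<open>[0, r]\<close> it lies
  below its chord \<open>(z / r) * r powr p\<close>. If \<open>r\<close> is a positive root, the chord bound turns
  \<open>rstar_eq \<alpha> z\<close> into the linear function \<open>(1 - z/r) / \<alpha>\<close> from below, so \<open>rstar_eq \<alpha>\<close> is
  positive on \<open>[0, r)\<close>; this gives uniqueness of the root, and existence follows from the
  intermediate value theorem. For \<open>g\<close>, both fractions are compared with the value
  \<open>(1 + (1+\<alpha>) r) / (1 + r) = \<alpha> r powr p / (1 + r)\<close>: the subtracted one stays strictly
  below it because \<open>\<alpha> y powr p < 1 + (1+\<alpha>) y\<close> and \<open>t \<mapsto> (1 + (1+\<alpha>) t) / (1 + t)\<close> increases,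
  and the chord bound makes the other one at least this value.
\<close>

lemma powr_le_chord:
  fixes x r p :: real
  assumes "0 \<le> x" "x \<le> r" "1 \<le> p"
  shows "x powr p \<le> x / r * r powr p"
proof (cases "r = 0")
  case False
  define t where "t = x / r"
  have t: "0 \<le> t" "t \<le> 1" and x: "x = t * r"
    using assms False by (auto simp: t_def)
  have "x powr p = t powr p * r powr p"
    using x t assms by (simp add: powr_mult)
  also have "\<dots> \<le> t powr 1 * r powr p"
    using t assms by (intro mult_right_mono powr_mono') auto
  also have "\<dots> = t * r powr p"
    using t by simp
  finally show ?thesis
    by (simp add: t_def)
qed (use assms in simp)

lemma rstar_eq_eq_0_iff:
  assumes "0 < a"
  shows "rstar_eq a r = 0 \<longleftrightarrow> a * r powr (2 - a/2) = 1 + (1 + a) * r"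
  using assms unfolding rstar_eq_def by (auto simp: field_simps)

lemma rstar_eq_pos_iff:
  assumes "0 < a"
  shows "rstar_eq a y > 0 \<longleftrightarrow> a * y powr (2 - a/2) < 1 + (1 + a) * y"
  using assms unfolding rstar_eq_def by (auto simp: field_simps)

lemma rstar_eq_pos_below_root:
  assumes a: "0 < a" "a \<le> 2" and root: "rstar_eq a r = 0" and y: "0 \<le> y" "y < r"
  shows "rstar_eq a y > 0"
proof -
  have "a * y powr (2 - a/2) \<le> a * (y / r * r powr (2 - a/2))"
    using powr_le_chord[of y r "2 - a/2"] a y by (intro mult_left_mono) auto
  also have "\<dots> = y / r * (a * r powr (2 - a/2))"
    by simp
  also have "\<dots> = y / r * (1 + (1 + a) * r)"
    using root a by (simp add: rstar_eq_eq_0_iff)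
  also have "\<dots> < 1 + (1 + a) * y"
    using a y by (simp add: field_simps)
  finally show ?thesis
    using a by (simp add: rstar_eq_pos_iff)
qed

lemma rstar_eq_root_unique:
  assumes "0 < a" "a \<le> 2" "0 < r" "0 < s" "rstar_eq a r = 0" "rstar_eq a s = 0"
  shows "r = s"
  using rstar_eq_pos_below_root[of a r s] rstar_eq_pos_below_root[of a s r] assms
  by (cases r s rule: linorder_cases) auto

lemma rstar_eq_has_root:
  assumes a: "0 < a" "a < 1"
  obtains r where "1 \<le> r" "rstar_eq a r = 0"
proof -
  define c where "c = 2 + 2/a"
  define M where "M = c\<^sup>2"
  have c: "1 \<le> c" and M: "1 \<le> M"
    using a by (auto simp: c_def M_def one_le_power)
  \<comment> \<open>\<open>M powr (3/2) = M * c\<close> already beats the linear part of \<open>rstar_eq a M\<close>.\<close>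
  have "M * c = M powr 1 * M powr (1/2)"
    using c M by (simp add: M_def powr_half_sqrt)
  also have "\<dots> = M powr (3/2)"
    by (subst powr_add[symmetric]) simp
  also have "\<dots> \<le> M powr (2 - a/2)"
    using M a by (intro powr_mono) auto
  finally have "a * (M * c) \<le> a * M powr (2 - a/2)"
    using a by simp
  moreover have "a * (M * c) = 2 * M + 2 * (M * a)" and "0 \<le> M * a"
    using a M by (simp_all add: c_def algebra_simps)
  ultimately have "1 + (1 + a) * M \<le> a * M powr (2 - a/2)"
    using M by (simp add: algebra_simps)
  then have "rstar_eq a M \<le> 0"
    using a by (simp add: rstar_eq_def field_simps)
  moreover have "0 \<le> rstar_eq a 1"
    using a by (simp add: rstar_eq_def)
  moreover have "continuous_on {1..M} (rstar_eq a)"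
    unfolding rstar_eq_def by (intro continuous_intros) auto
  ultimately obtain r where "r \<in> {1..M}" "rstar_eq a r = 0"
    using IVT2'[of "rstar_eq a" M 0 1] M by auto
  then show ?thesis
    using that by auto
qed

lemma g_subtrahend_less:
  assumes a: "0 < a" "a \<le> 2" and root: "rstar_eq a r = 0" and y: "0 \<le> y" "y < r"
  shows "a * y powr (2 - a/2) / (1 + y) < (1 + (1 + a) * r) / (1 + r)"
proof -
  have "a * y powr (2 - a/2) < 1 + (1 + a) * y"
    using rstar_eq_pos_below_root[OF a root y] a by (simp add: rstar_eq_pos_iff)
  then have "a * y powr (2 - a/2) / (1 + y) < (1 + (1 + a) * y) / (1 + y)"
    using y by (simp add: divide_strict_right_mono)
  also have "\<dots> \<le> (1 + (1 + a) * r) / (1 + r)"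
    using a y by (simp add: divide_simps algebra_simps mult_left_mono)
  finally show ?thesis .
qed

lemma g_minuend_ge:
  assumes a: "0 < a" "a \<le> 1" and root: "rstar_eq a r = 0" and x: "0 \<le> x" "x \<le> r" and r: "0 < r"
  shows "(1 + (1 + a) * r) / (1 + r) \<le> (2 + 2 * (1 + a) * x - a * x powr (2 - a/2)) / (1 + x)"
proof -
  define t where "t = x / r"
  have t: "0 \<le> t" "t \<le> 1" and xt: "x = t * r"
    using x r by (auto simp: t_def)
  have "a * x powr (2 - a/2) \<le> a * (t * r powr (2 - a/2))"
    using powr_le_chord[of x r "2 - a/2"] a x by (intro mult_left_mono) (auto simp: t_def)
  also have "\<dots> = t * (a * r powr (2 - a/2))"
    by simp
  also have "\<dots> = t * (1 + (1 + a) * r)"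
    using root a by (simp add: rstar_eq_eq_0_iff)
  finally have chord: "a * x powr (2 - a/2) \<le> t * (1 + (1 + a) * r)" .
  \<comment> \<open>After the chord bound both sides are linear in \<open>t\<close>, agree at \<open>t = 1\<close> and differ by
      \<open>(1 - t) (1 + (1 - a) r) \<ge> 0\<close>.\<close>
  have "(1 + (1 + a) * r) * (1 + x) + (1 - t) * (1 + (1 - a) * r)
        = (2 + 2 * (1 + a) * x - t * (1 + (1 + a) * r)) * (1 + r)"
    by (simp add: xt algebra_simps)
  moreover have "0 \<le> (1 - t) * (1 + (1 - a) * r)"
    using t a r by simp
  moreover have "(2 + 2 * (1 + a) * x - t * (1 + (1 + a) * r)) * (1 + r)
        \<le> (2 + 2 * (1 + a) * x - a * x powr (2 - a/2)) * (1 + r)"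
    using chord r by (intro mult_right_mono) auto
  ultimately have "(1 + (1 + a) * r) * (1 + x)
        \<le> (2 + 2 * (1 + a) * x - a * x powr (2 - a/2)) * (1 + r)"
    by linarith
  then show ?thesis
    using x r by (simp add: divide_simps mult.commute)
qed

theorem lemma2p1:
  fixes \<alpha> :: real
  assumes "0 < \<alpha>" and "\<alpha> < 1"
  shows "(\<exists>!r. r > 0 \<and> rstar_eq \<alpha> r = 0) \<and>
         (\<forall>x y. 0 \<le> x \<and> x < (THE r. r > 0 \<and> rstar_eq \<alpha> r = 0) \<and>
                 0 \<le> y \<and> y < (THE r. r > 0 \<and> rstar_eq \<alpha> r = 0) \<longrightarrow> g x y \<alpha> > 0)"
proof -
  obtain r where r: "1 \<le> r" "rstar_eq \<alpha> r = 0"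
    using rstar_eq_has_root assms by blast
  have unique: "\<exists>!r. r > 0 \<and> rstar_eq \<alpha> r = 0"
    using r rstar_eq_root_unique[of \<alpha>] assms by (intro ex1I[of _ r]) auto
  have the_root: "(THE r. r > 0 \<and> rstar_eq \<alpha> r = 0) = r"
    using unique r by (intro the1_equality) auto
  have "g x y \<alpha> > 0" if "0 \<le> x" "x < r" "0 \<le> y" "y < r" for x y
    using g_minuend_ge[of \<alpha> r x] g_subtrahend_less[of \<alpha> r y] that r assms
    unfolding g_def by force
  then show ?thesis
    using unique unfolding the_root by blast
qed

end
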